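(* Let $r=\max\{\eta_a,\eta_b\}$, $\alpha=\max\{\sigma_{\max}(U):U\in B(V_*,r)\}$, $L=6\alpha^2\max\{|\lambda_1|,|\lambda_{\max}|\}$. Let $\eta_1\in(0,\min\{1,\eta_a,\eta_b\})$, $\eta_2\in(0,\eta_1)$ and $0<\delta_b\leqslant\min\left\{\frac{\eta_1-\eta_2}{L\max\{\eta_a,\eta_b\}+|\lambda_1|\alpha(\alpha+1)\eta_2},\delta^*\right\}$. Then $$g\big(B([V_*],\eta_2)\times[0,\delta_b]\big)\subset B([V_*],\eta_1).$$
   Context: Let $\mathcal{V}^{N_g}$ be a real Hilbert space of finite dimension $N_g$ with inner product $(\cdot,\cdot)$, and let $H:\mathcal{V}^{N_g}\to\mathcal{V}^{N_g}$ be a self-adjoint linear operator with eigenvalues $\lambda_1\leqslant\cdots\leqslant\lambda_{N_g}$, $\lambda_{\max}=\lambda_{N_g}$, $\lambda_1<0$. Fix $N<N_g$ with $\lambda_N<\lambda_{N+1}$. Elements of $(\mathcal{V}^{N_g})^N$ are written $U=(u_1,\dots,u_N)$; $U^\top V=((u_i,v_j))_{i,j=1}^N$; for a real $N\times N$ matrix $A=(a_{kj})$, $UA$ has $j$-th component $\sum_k a_{kj}u_k$; $HU=(Hu_1,\dots,Hu_N)$; $\|U\|=\operatorname{tr}(U^\top U)^{1/2}$; $\sigma_{\max}(U)=\sqrt{\lambda_{\max}(U^\top U)}$. Set $\nabla E(U)=HU$. For $U$, $\mathcal{A}_U=\nabla E(U)U^\top-U\nabla E(U)^\top$ is the linear operator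 on $\mathcal{V}^{N_g}$ given by $\mathcal{A}_Uw=\sum_{i=1}^N\big(Hu_i\,(u_i,w)-u_i\,(Hu_i,w)\big)$, applied componentwise. Let $V_*$ satisfy $V_*^\top V_*=I_N$, $HV_*=V_*\operatorname{diag}(\lambda_1,\dots,\lambda_N)$. $\mathcal{O}^N$ denotes the $N\times N$ orthogonal matrices, $\operatorname{dist}([U],[V_*])=\inf_{Q\in\mathcal{O}^N}\|UQ-V_*\|$, $B(U,\eta)=\{W:\|W-U\|\leqslant\eta\}$, $B([V_*],\eta)=\{W:\operatorname{dist}([W],[V_*])\leqslant\eta\}$. Fix constants $\eta_a,\eta_b,\delta^*>0$ such that (as asserted in the paper) there is a unique function $\hat g:B(V_*,\eta_a)\times[0,\delta^*]\to B(V_*,\eta_b)$ with $\hat g(U,s)-U=-s\,\mathcal{A}_{\frac{\hat g(U,s)+U}{2}}\frac{\hat g(U,s)+U}{2}$, and a unique function $g:B([V_*],\eta_a)\times[0,\delta^*]\to B([V_*],\eta_b)$ with $g(U,s)=\hat g(U,s)-s\nabla E(\hat g(U,s))(I_N-\hat g(U,s)^\top\hat g(U,s))$, defined on $B(V_*,\eta_a)$ by this formula and extended to $B([V_*],\eta_a)$ by orthogonal invariance $g(UQ,s)=g(U,s)Q$ for $Q\in\mathcal{O}^N$. *)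

theory Defs
  imports "HOL-Analysis.Analysis"
begin

text \<open>Elements of (V^{N_g})^N are vectors 'v^'n with 'n a finite index type of cardinality N.
  The norm on 'v^'n is the l2-norm of the component norms, i.e. tr(U^T U)^(1/2).\<close>

definition gram :: "'v::real_inner^'n::finite \<Rightarrow> 'v^'n \<Rightarrow> real^'n^'n" where
  "gram U V = (\<chi> i j. inner (U$i) (V$j))"

definition rmul :: "'v::real_vector^'n::finite \<Rightarrow> real^'n^'n \<Rightarrow> 'v^'n" where
  "rmul U A = (\<chi> j. \<Sum>k\<in>UNIV. (A$k$j) *\<^sub>R U$k)"

definition opapp :: "('v \<Rightarrow> 'v) \<Rightarrow> 'v^'n::finite \<Rightarrow> 'v^'n" where
  "opapp H U = (\<chi> i. H (U$i))"

definition AU :: "('v::real_inner \<Rightarrow> 'v) \<Rightarrow> 'v^'n::finite \<Rightarrow> 'v \<Rightarrow> 'v" where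
  "AU H U w = (\<Sum>i\<in>UNIV. inner (U$i) w *\<^sub>R H (U$i) - inner (H (U$i)) w *\<^sub>R U$i)"

definition sigma_max :: "'v::real_inner^'n::finite \<Rightarrow> real" where
  "sigma_max U = sqrt (Sup {l. \<exists>x. x \<noteq> 0 \<and> gram U U *v x = l *\<^sub>R x})"

definition dist_cls :: "'v::real_inner^'n::finite \<Rightarrow> 'v^'n \<Rightarrow> real" where
  "dist_cls U V = Inf {norm (rmul U Q - V) | Q. orthogonal_matrix Q}"

end

theory Submission
  imports Defs
begin

(* Fix a representative U = W Q of the class of W that is almost as close to V* as the class.
   The midpoint step Y = ghat(U, s) is generated by the skew-symmetric operator A_M, so it
   conserves the Gram matrix, Y^T Y = U^T U; hence the correction H Y (I - Y^T Y) is of size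
   |H| alpha (alpha + 1) |U - V*|. The generator A_M M vanishes at M = V*, because
   H V* = V* Lambda, and grows at most like 2 |H| alpha (alpha + 1) |M - V*|. So one step moves
   U by at most s 3 |H| alpha (alpha + 1) r <= s L r, which the choice of delta_b keeps below
   eta1 - eta2, and orthogonal invariance of g carries the estimate back to the class of W. *)

definition synthesis :: "'v::real_vector^'n::finite \<Rightarrow> real^'n \<Rightarrow> 'v" where
  "synthesis U x = (\<Sum>k\<in>UNIV. x$k *\<^sub>R U$k)"

definition analysis :: "'v::real_inner^'n::finite \<Rightarrow> 'v \<Rightarrow> real^'n" where
  "analysis U w = (\<chi> k. inner (U$k) w)"

lemma linear_synthesis: "linear (synthesis U)"
  by (rule linearI) (simp_all add: synthesis_def scaleR_add_left sum.distrib scaleR_sum_right)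

lemma bounded_linear_synthesis: "bounded_linear (synthesis U)"
  using linear_synthesis linear_conv_bounded_linear by blast

lemma inner_synthesis_left: "inner (synthesis U x) w = inner x (analysis U w)"
  by (simp add: synthesis_def analysis_def inner_sum_left inner_vec_def)

lemma gram_mult_vec: "gram U W *v x = analysis U (synthesis W x)"
  by (simp add: vec_eq_iff gram_def matrix_vector_mult_def analysis_def synthesis_def
      inner_sum_right mult.commute)

lemma norm_synthesis_le: "norm (synthesis U x) \<le> norm U * norm x"
proof -
  have "norm (synthesis U x) \<le> (\<Sum>k\<in>UNIV. \<bar>x$k\<bar> * norm (U$k))"
    unfolding synthesis_def by (rule order_trans[OF norm_sum]) simp
  also have "\<dots> = inner (\<chi> k. \<bar>x$k\<bar>) (\<chi> k. norm (U$k))"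
    by (simp add: inner_vec_def)
  also have "\<dots> \<le> norm (\<chi> k. \<bar>x$k\<bar>) * norm (\<chi> k. norm (U$k))"
    by (rule norm_cauchy_schwarz)
  also have "\<dots> = norm x * norm U"
    by (simp add: norm_vec_def L2_set_def)
  finally show ?thesis by (simp add: mult.commute)
qed

lemma power2_norm_add_scaleR:
  fixes a b :: "'a::real_inner"
  shows "(norm (a + t *\<^sub>R b))\<^sup>2 = (norm a)\<^sup>2 + 2 * t * inner a b + t\<^sup>2 * (norm b)\<^sup>2"
  unfolding power2_norm_eq_inner
  by (simp add: inner_add_left inner_add_right inner_commute[of b a] power2_eq_square algebra_simps)

lemma nonpos_if_le_quadratic:
  fixes a c :: real
  assumes "\<And>t. 0 < t \<Longrightarrow> t * a \<le> t\<^sup>2 * c"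
  shows "a \<le> 0"
proof (rule ccontr)
  assume "\<not> a \<le> 0"
  define t where "t = a / (\<bar>c\<bar> + 1)"
  have "0 < t" using \<open>\<not> a \<le> 0\<close> by (simp add: t_def)
  then have "a \<le> t * c" using assms[of t] by (simp add: power2_eq_square)
  also have "\<dots> \<le> t * \<bar>c\<bar>" using \<open>0 < t\<close> by (simp add: mult_left_mono)
  also have "\<dots> < a" using \<open>\<not> a \<le> 0\<close> by (simp add: t_def field_simps)
  finally show False by simp
qed

lemma synthesis_attains_operator_norm:
  fixes U :: "'v::real_normed_vector^'n::finite"
  obtains x0 where "norm x0 = 1" "\<And>x. norm (synthesis U x) \<le> norm (synthesis U x0) * norm x"
proof -
  obtain x0 :: "real^'n" where x0: "x0 \<in> sphere 0 1"
    and max: "\<forall>y\<in>sphere 0 1. norm (synthesis U y) \<le> norm (synthesis U x0)"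
  proof (rule continuous_attains_sup[OF compact_sphere, THEN bexE])
    show "sphere (0::real^'n) 1 \<noteq> {}" by simp
    show "continuous_on (sphere 0 1) (\<lambda>x. norm (synthesis U x))"
      by (intro continuous_on_norm linear_continuous_on bounded_linear_synthesis)
  qed
  have "norm (synthesis U x) \<le> norm (synthesis U x0) * norm x" for x
  proof (cases "x = 0")
    case False
    have "norm (synthesis U ((1 / norm x) *\<^sub>R x)) \<le> norm (synthesis U x0)"
      using max False by simp
    then show ?thesis
      using False by (simp add: linear_scale[OF linear_synthesis] field_simps)
  qed (simp add: linear_0[OF linear_synthesis])
  with x0 that show ?thesis by simp
qed

text \<open>A maximiser of the Rayleigh quotient of the Gram matrix is an eigenvector: otherwise
  moving it towards its residual would increase the quotient to first order.\<close>
lemma gram_mult_vec_maximiser: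
  assumes x0: "norm x0 = 1" and bound: "\<And>x. norm (synthesis U x) \<le> norm (synthesis U x0) * norm x"
  shows "gram U U *v x0 = (norm (synthesis U x0))\<^sup>2 *\<^sub>R x0"
proof -
  let ?T = "synthesis U"
  define \<mu> where "\<mu> = (norm (?T x0))\<^sup>2"
  define y where "y = gram U U *v x0 - \<mu> *\<^sub>R x0"
  have Tx0_Ty: "inner (?T x0) (?T y) = inner y (gram U U *v x0)"
    by (simp add: gram_mult_vec inner_synthesis_left[symmetric] inner_commute)
  have "(norm y)\<^sup>2 = inner y (gram U U *v x0 - \<mu> *\<^sub>R x0)"
    by (metis power2_norm_eq_inner y_def)
  then have norm_y: "(norm y)\<^sup>2 = inner y (gram U U *v x0) - \<mu> * inner x0 y"
    by (simp add: inner_diff_right inner_commute)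
  have "t * (2 * (norm y)\<^sup>2) \<le> t\<^sup>2 * (\<mu> * (norm y)\<^sup>2 - (norm (?T y))\<^sup>2)" if "0 < t" for t
  proof -
    have "(norm (?T (x0 + t *\<^sub>R y)))\<^sup>2 \<le> \<mu> * (norm (x0 + t *\<^sub>R y))\<^sup>2"
      unfolding \<mu>_def power_mult_distrib[symmetric] by (intro power_mono bound) simp
    moreover have "(norm (?T (x0 + t *\<^sub>R y)))\<^sup>2
        = \<mu> + 2 * t * inner y (gram U U *v x0) + t\<^sup>2 * (norm (?T y))\<^sup>2"
      using Tx0_Ty by (simp add: linear_add[OF linear_synthesis] linear_scale[OF linear_synthesis]
          \<mu>_def power2_norm_add_scaleR)
    moreover have "(norm (x0 + t *\<^sub>R y))\<^sup>2 = 1 + 2 * t * inner x0 y + t\<^sup>2 * (norm y)\<^sup>2"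
      using x0 by (simp add: power2_norm_add_scaleR)
    ultimately have "t * (2 * (inner y (gram U U *v x0) - \<mu> * inner x0 y))
        \<le> t\<^sup>2 * (\<mu> * (norm y)\<^sup>2 - (norm (?T y))\<^sup>2)"
      by (simp add: algebra_simps)
    then show ?thesis by (simp only: norm_y)
  qed
  then have "2 * (norm y)\<^sup>2 \<le> 0" by (rule nonpos_if_le_quadratic)
  then show ?thesis by (simp add: y_def \<mu>_def)
qed

lemma sigma_max_eq_onorm: "sigma_max U = onorm (synthesis U)"
proof -
  obtain x0 where x0: "norm x0 = 1"
    and bound: "\<And>x. norm (synthesis U x) \<le> norm (synthesis U x0) * norm x"
    using synthesis_attains_operator_norm[of U] by blast
  note eig = gram_mult_vec_maximiser[OF x0 bound]
  let ?E = "{l. \<exists>x. x \<noteq> 0 \<and> gram U U *v x = l *\<^sub>R x}"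
  have "l \<le> (norm (synthesis U x0))\<^sup>2" if "l \<in> ?E" for l
  proof -
    obtain x where "x \<noteq> 0" and "gram U U *v x = l *\<^sub>R x"
      using \<open>l \<in> ?E\<close> by blast
    then have "l * (norm x)\<^sup>2 = (norm (synthesis U x))\<^sup>2"
      by (simp add: power2_norm_eq_inner inner_synthesis_left gram_mult_vec[symmetric])
    also have "\<dots> \<le> (norm (synthesis U x0))\<^sup>2 * (norm x)\<^sup>2"
      unfolding power_mult_distrib[symmetric] by (intro power_mono bound norm_ge_zero)
    finally show ?thesis using \<open>x \<noteq> 0\<close> by simp
  qed
  moreover have "(norm (synthesis U x0))\<^sup>2 \<in> ?E"
    using x0 eig by (intro CollectI exI[of _ x0]) auto
  ultimately have "sigma_max U = norm (synthesis U x0)"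
    unfolding sigma_max_def by (subst cSup_eq_maximum) auto
  moreover have "onorm (synthesis U) = norm (synthesis U x0)"
    using onorm[OF bounded_linear_synthesis, of U x0] onorm_le[OF bound] x0 by simp
  ultimately show ?thesis by simp
qed

lemma sigma_max_nonneg: "0 \<le> sigma_max U"
  by (simp add: sigma_max_eq_onorm onorm_pos_le bounded_linear_synthesis)

lemma norm_synthesis_le_sigma_max: "norm (synthesis U x) \<le> sigma_max U * norm x"
  by (simp add: sigma_max_eq_onorm onorm bounded_linear_synthesis)

lemma norm_analysis_le_sigma_max: "norm (analysis U w) \<le> sigma_max U * norm w"
proof -
  have "(norm (analysis U w))\<^sup>2 = inner (synthesis U (analysis U w)) w"
    by (simp add: inner_synthesis_left power2_norm_eq_inner)
  also have "\<dots> \<le> sigma_max U * norm (analysis U w) * norm w"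
    using norm_cauchy_schwarz[of "synthesis U (analysis U w)" w]
      mult_right_mono[OF norm_synthesis_le_sigma_max norm_ge_zero] by (meson order_trans)
  finally show ?thesis
    by (cases "analysis U w = 0") (simp_all add: sigma_max_nonneg power2_eq_square algebra_simps)
qed

lemma sigma_max_le_norm: "sigma_max U \<le> norm U"
  unfolding sigma_max_eq_onorm by (rule onorm_le) (rule norm_synthesis_le)

lemma sigma_max_orthonormal:
  assumes "gram V V = mat 1"
  shows "sigma_max V = 1"
proof -
  have "norm (synthesis V x) = norm x" for x
    using assms by (simp add: norm_eq_sqrt_inner inner_synthesis_left gram_mult_vec[symmetric])
  then have "onorm (synthesis V) = 1"
    using onorm[OF bounded_linear_synthesis, of V 1] onorm_le[of "synthesis V" 1] by simp
  then show ?thesis by (simp add: sigma_max_eq_onorm)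
qed

lemma norm_vec_map_le:
  fixes f :: "'a::real_normed_vector \<Rightarrow> 'b::real_normed_vector"
  assumes "0 \<le> c" and "\<And>v. norm (f v) \<le> c * norm v"
  shows "norm (\<chi> i. f (x$i)) \<le> c * norm (x :: 'a^'n::finite)"
proof (rule power2_le_imp_le)
  have "(norm (\<chi> i. f (x$i)))\<^sup>2 = (\<Sum>i\<in>UNIV. (norm (f (x$i)))\<^sup>2)"
    by (simp add: norm_vec_def L2_set_def sum_nonneg)
  also have "\<dots> \<le> (\<Sum>i\<in>UNIV. c\<^sup>2 * (norm (x$i))\<^sup>2)"
    unfolding power_mult_distrib[symmetric] by (intro sum_mono power_mono assms(2)) simp
  also have "\<dots> = (c * norm x)\<^sup>2"
    by (simp add: norm_vec_def L2_set_def sum_nonneg power_mult_distrib sum_distrib_left)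
  finally show "(norm (\<chi> i. f (x$i)))\<^sup>2 \<le> (c * norm x)\<^sup>2" .
qed (use assms(1) in simp)

lemma norm_opapp_le:
  assumes "0 \<le> c" and "\<And>v. norm (L v) \<le> c * norm v"
  shows "norm (opapp L U) \<le> c * norm U"
  unfolding opapp_def by (rule norm_vec_map_le[OF assms])

lemma norm_transpose: "norm (transpose (A :: real^'n::finite^'m::finite)) = norm A"
  unfolding norm_vec_def L2_set_def transpose_def
  by (simp add: sum_nonneg) (subst sum.swap, simp)

lemma transpose_gram: "transpose (gram U W) = gram W U"
  by (simp add: vec_eq_iff transpose_def gram_def inner_commute)

lemma gram_diff_left: "gram (U - V) W = gram U W - gram V W"
  by (simp add: vec_eq_iff gram_def inner_diff_left)

lemma gram_diff_right: "gram U (V - W) = gram U V - gram U W"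
  by (simp add: vec_eq_iff gram_def inner_diff_right)

lemma norm_gram_le: "norm (gram U W) \<le> sigma_max W * norm U"
proof -
  have "gram U W = (\<chi> i. analysis W (U$i))"
    by (simp add: vec_eq_iff gram_def analysis_def inner_commute)
  then show ?thesis
    using norm_vec_map_le[OF sigma_max_nonneg norm_analysis_le_sigma_max, of W U] by simp
qed

lemma rmul_nth: "rmul U A $ j = synthesis U (column j A)"
  by (simp add: rmul_def synthesis_def column_def)

lemma norm_rmul_le_sigma_max: "norm (rmul U A) \<le> sigma_max U * norm A"
proof -
  have "rmul U A = (\<chi> j. synthesis U (transpose A $ j))"
    by (simp add: vec_eq_iff rmul_nth column_def transpose_def)
  then have "norm (rmul U A) \<le> sigma_max U * norm (transpose A)"
    using norm_vec_map_le[OF sigma_max_nonneg norm_synthesis_le_sigma_max, of U "transpose A"]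
    by simp
  then show ?thesis by (simp add: norm_transpose)
qed

lemma power2_norm_eq_sum_analysis_Basis:
  "(norm (U :: 'v::euclidean_space^'n::finite))\<^sup>2 = (\<Sum>b\<in>Basis. (norm (analysis U b))\<^sup>2)"
proof -
  have Parseval: "(norm v)\<^sup>2 = (\<Sum>b\<in>Basis. (inner v b)\<^sup>2)" for v :: 'v
    unfolding power2_norm_eq_inner by (simp only: euclidean_inner[of v v] power2_eq_square)
  have "(norm U)\<^sup>2 = (\<Sum>k\<in>UNIV. (norm (U$k))\<^sup>2)"
    by (simp add: norm_vec_def L2_set_def sum_nonneg)
  also have "\<dots> = (\<Sum>k\<in>UNIV. \<Sum>b\<in>Basis. (inner (U$k) b)\<^sup>2)"
    by (simp only: Parseval)
  also have "\<dots> = (\<Sum>b\<in>Basis. \<Sum>k\<in>UNIV. (inner (U$k) b)\<^sup>2)"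
    by (rule sum.swap)
  also have "\<dots> = (\<Sum>b\<in>Basis. (norm (analysis U b))\<^sup>2)"
    by (simp add: norm_vec_def L2_set_def sum_nonneg analysis_def)
  finally show ?thesis .
qed

lemma analysis_rmul: "analysis (rmul U A) w = transpose A *v analysis U w"
  by (simp add: vec_eq_iff analysis_def rmul_def transpose_def matrix_vector_mult_def
      inner_sum_left mult.commute)

text \<open>In coordinates of an orthonormal basis of the space, each row of \<open>U A\<close> is the
  corresponding row of \<open>U\<close> multiplied by \<open>A\<close>.\<close>
lemma norm_rmul_le:
  fixes U :: "'v::euclidean_space^'n::finite"
  assumes "0 \<le> c" and "\<And>z. norm (transpose A *v z) \<le> c * norm z"
  shows "norm (rmul U A) \<le> c * norm U"
proof (rule power2_le_imp_le)
  have "(norm (rmul U A))\<^sup>2 = (\<Sum>b\<in>Basis. (norm (transpose A *v analysis U b))\<^sup>2)"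
    by (simp add: power2_norm_eq_sum_analysis_Basis[of "rmul U A"] analysis_rmul)
  also have "\<dots> \<le> (\<Sum>b\<in>Basis. c\<^sup>2 * (norm (analysis U b))\<^sup>2)"
    unfolding power_mult_distrib[symmetric] by (intro sum_mono power_mono assms(2)) simp
  also have "\<dots> = (c * norm U)\<^sup>2"
    by (simp add: power2_norm_eq_sum_analysis_Basis[of U] power_mult_distrib sum_distrib_left)
  finally show "(norm (rmul U A))\<^sup>2 \<le> (c * norm U)\<^sup>2" .
qed (use assms(1) in simp)

lemma inner_AU_skew: "inner (AU H M w) z = - inner (AU H M z) w"
  unfolding AU_def inner_sum_left sum_negf[symmetric]
  by (rule sum.cong) (simp_all add: inner_diff_left algebra_simps)

text \<open>The midpoint rule for the skew-symmetric generator \<open>A\<^sub>M\<close> conserves the Gram matrix,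
  since \<open>Y\<^sup>TY - U\<^sup>TU = M\<^sup>T(Y - U) + (Y - U)\<^sup>TM\<close> for the midpoint \<open>M\<close>.\<close>
lemma gram_midpoint_step:
  assumes "Y - U = - s *\<^sub>R opapp (AU H ((1/2) *\<^sub>R (Y + U))) ((1/2) *\<^sub>R (Y + U))"
  shows "gram Y Y = gram U U"
proof -
  define M where "M = (1/2) *\<^sub>R (Y + U)"
  have diff: "Y$j - U$j = - s *\<^sub>R AU H M (M$j)" for j
    using arg_cong[OF assms, of "\<lambda>X. X$j"] by (simp add: opapp_def M_def)
  have "inner (Y$i) (Y$j) = inner (U$i) (U$j)" for i j
  proof -
    have "inner (Y$i) (Y$j) - inner (U$i) (U$j)
        = inner (M$i) (Y$j - U$j) + inner (Y$i - U$i) (M$j)"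
      by (simp add: M_def inner_add_left inner_add_right inner_diff_left inner_diff_right
          inner_commute algebra_simps)
    also have "\<dots> = 0"
      using inner_AU_skew[of H M "M$j" "M$i"] by (simp add: diff inner_commute)
    finally show ?thesis by simp
  qed
  then show ?thesis by (simp add: gram_def vec_eq_iff)
qed

lemma column_gram: "column j (gram U W) = analysis U (W$j)"
  by (simp add: vec_eq_iff column_def gram_def analysis_def)

text \<open>Since \<open>H V = V \<Lambda>\<close>, the operator \<open>A\<^sub>V\<close> kills \<open>V\<close>, so \<open>A\<^sub>M\<close> is a combination of
  terms each containing one factor \<open>E = M - V\<close>.\<close>
lemma AU_eq_deviation_terms:
  assumes H_lin: "linear H" and H_sa: "\<And>x y. inner (H x) y = inner x (H y)"
    and V_eig: "\<And>i. H (V$i) = l i *\<^sub>R V$i"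
  shows "AU H M w = H (synthesis (M - V) (analysis M w)) + H (synthesis V (analysis (M - V) w))
      - synthesis (M - V) (analysis M (H w)) - synthesis V (analysis (M - V) (H w))"
proof -
  have "inner (M$i) w *\<^sub>R H (M$i) - inner (H (M$i)) w *\<^sub>R M$i
      = inner (M$i) w *\<^sub>R H (M$i - V$i) + inner (M$i - V$i) w *\<^sub>R H (V$i)
        - inner (M$i) (H w) *\<^sub>R (M$i - V$i) - inner (M$i - V$i) (H w) *\<^sub>R V$i" for i
    using H_sa[of "V$i" w] H_sa[of "M$i" w]
    by (simp add: V_eig linear_diff[OF H_lin] inner_diff_left algebra_simps)
  then show ?thesis
    by (simp add: AU_def synthesis_def analysis_def linear_sum[OF H_lin] linear_scale[OF H_lin]
        sum.distrib sum_subtractf)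
qed

lemma opapp_AU_eq_deviation_terms:
  assumes "linear H" and "\<And>x y. inner (H x) y = inner x (H y)"
    and "\<And>i. H (V$i) = l i *\<^sub>R V$i"
  shows "opapp (AU H M) M = opapp H (rmul (M - V) (gram M M)) + opapp H (rmul V (gram (M - V) M))
      - rmul (M - V) (gram M (opapp H M)) - rmul V (gram (M - V) (opapp H M))"
  by (simp add: vec_eq_iff opapp_def rmul_nth column_gram AU_eq_deviation_terms[OF assms])

lemma norm_rmul_gram_le:
  fixes E :: "'v::euclidean_space^'n::finite"
  shows "norm (rmul E (gram U W)) \<le> sigma_max U * sigma_max W * norm E"
proof (rule norm_rmul_le)
  fix z
  have "norm (transpose (gram U W) *v z) \<le> sigma_max W * norm (synthesis U z)"
    by (simp add: transpose_gram gram_mult_vec norm_analysis_le_sigma_max)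
  also have "\<dots> \<le> sigma_max U * sigma_max W * norm z"
    using mult_left_mono[OF norm_synthesis_le_sigma_max[of U z] sigma_max_nonneg[of W]]
    by (simp add: ac_simps)
  finally show "norm (transpose (gram U W) *v z) \<le> sigma_max U * sigma_max W * norm z" .
qed (simp add: sigma_max_nonneg)

lemma norm_rmul_by_gram_le: "norm (rmul U (gram E W)) \<le> sigma_max U * sigma_max W * norm E"
proof -
  have "norm (rmul U (gram E W)) \<le> sigma_max U * norm (gram E W)"
    by (rule norm_rmul_le_sigma_max)
  also have "\<dots> \<le> sigma_max U * (sigma_max W * norm E)"
    by (intro mult_left_mono norm_gram_le sigma_max_nonneg)
  finally show ?thesis by (simp add: mult.assoc)
qed

lemma sigma_max_opapp_le:
  assumes "linear H" and "\<And>x. norm (H x) \<le> h * norm x" and "0 \<le> h"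
  shows "sigma_max (opapp H U) \<le> h * sigma_max U"
  unfolding sigma_max_eq_onorm
proof (rule onorm_le)
  fix x
  have "synthesis (opapp H U) x = H (synthesis U x)"
    by (simp add: synthesis_def opapp_def linear_sum[OF assms(1)] linear_scale[OF assms(1)])
  then show "norm (synthesis (opapp H U) x) \<le> h * onorm (synthesis U) * norm x"
    using assms(2)[of "synthesis U x"] mult_left_mono[OF norm_synthesis_le_sigma_max[of U x] assms(3)]
    by (simp add: sigma_max_eq_onorm mult.assoc)
qed

lemma norm_opapp_AU_le:
  fixes H :: "'v::euclidean_space \<Rightarrow> 'v" and M V :: "'v^'n::finite"
  assumes H_lin: "linear H" and H_sa: "\<And>x y. inner (H x) y = inner x (H y)"
    and V_eig: "\<And>i. H (V$i) = l i *\<^sub>R V$i" and V_orth: "gram V V = mat 1"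
    and H_le: "\<And>x. norm (H x) \<le> h * norm x" and "0 \<le> h"
  shows "norm (opapp (AU H M) M) \<le> 2 * h * sigma_max M * (sigma_max M + 1) * norm (M - V)"
proof -
  define \<sigma> where "\<sigma> = sigma_max M"
  define E where "E = M - V"
  have "0 \<le> \<sigma>" by (simp add: \<sigma>_def sigma_max_nonneg)
  have \<sigma>_HM: "sigma_max (opapp H M) \<le> h * \<sigma>"
    unfolding \<sigma>_def by (rule sigma_max_opapp_le[OF H_lin H_le \<open>0 \<le> h\<close>])
  have "norm (opapp H (rmul E (gram M M))) \<le> h * norm (rmul E (gram M M))"
    by (rule norm_opapp_le[OF \<open>0 \<le> h\<close> H_le])
  also have "\<dots> \<le> h * (\<sigma> * \<sigma> * norm E)"
    unfolding \<sigma>_def by (intro mult_left_mono norm_rmul_gram_le \<open>0 \<le> h\<close>)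
  finally have T1: "norm (opapp H (rmul E (gram M M))) \<le> h * (\<sigma> * \<sigma> * norm E)" .
  have "norm (opapp H (rmul V (gram E M))) \<le> h * norm (rmul V (gram E M))"
    by (rule norm_opapp_le[OF \<open>0 \<le> h\<close> H_le])
  also have "\<dots> \<le> h * (\<sigma> * norm E)"
    using norm_rmul_by_gram_le[of V E M] \<open>0 \<le> h\<close>
    by (simp add: \<sigma>_def sigma_max_orthonormal[OF V_orth] mult_left_mono)
  finally have T2: "norm (opapp H (rmul V (gram E M))) \<le> h * (\<sigma> * norm E)" .
  have T3: "norm (rmul E (gram M (opapp H M))) \<le> \<sigma> * (h * \<sigma>) * norm E"
    using norm_rmul_gram_le[of E M "opapp H M"]
      mult_right_mono[OF mult_left_mono[OF \<sigma>_HM \<open>0 \<le> \<sigma>\<close>] norm_ge_zero[of E]]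
    unfolding \<sigma>_def by linarith
  have T4: "norm (rmul V (gram E (opapp H M))) \<le> h * \<sigma> * norm E"
    using norm_rmul_by_gram_le[of V E "opapp H M"] mult_right_mono[OF \<sigma>_HM norm_ge_zero[of E]]
    by (simp add: sigma_max_orthonormal[OF V_orth])
  have "norm (opapp (AU H M) M) \<le> norm (opapp H (rmul E (gram M M)))
      + norm (opapp H (rmul V (gram E M))) + norm (rmul E (gram M (opapp H M)))
      + norm (rmul V (gram E (opapp H M)))"
    unfolding opapp_AU_eq_deviation_terms[OF H_lin H_sa V_eig] E_def[symmetric]
    by (intro norm_triangle_le_diff norm_triangle_le add_mono order_refl)
  then show ?thesis using T1 T2 T3 T4 by (simp add: \<sigma>_def E_def algebra_simps)
qed

lemma norm_gram_diff_le: "norm (gram U U - gram V V) \<le> (sigma_max U + sigma_max V) * norm (U - V)"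
proof -
  have "gram U U - gram V V = gram (U - V) U + transpose (gram (U - V) V)"
    unfolding transpose_gram by (simp add: gram_diff_left gram_diff_right)
  also have "norm \<dots> \<le> sigma_max U * norm (U - V) + sigma_max V * norm (U - V)"
    by (intro norm_triangle_le add_mono norm_gram_le) (simp add: norm_transpose norm_gram_le)
  finally show ?thesis by (simp add: algebra_simps)
qed

lemma norm_midpoint_step_le:
  fixes H :: "'v::euclidean_space \<Rightarrow> 'v" and U Y V :: "'v^'n::finite"
  assumes H_lin: "linear H" and H_sa: "\<And>x y. inner (H x) y = inner x (H y)"
    and V_eig: "\<And>i. H (V$i) = l i *\<^sub>R V$i" and V_orth: "gram V V = mat 1"
    and H_le: "\<And>x. norm (H x) \<le> h * norm x" and "0 \<le> h"
    and step: "Y - U = - s *\<^sub>R opapp (AU H ((1/2) *\<^sub>R (Y + U))) ((1/2) *\<^sub>R (Y + U))"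
    and "0 \<le> s"
    and sigma_le: "\<And>W. norm (W - V) \<le> r \<Longrightarrow> sigma_max W \<le> a"
    and Y_near: "norm (Y - V) \<le> r" and U_near: "norm (U - V) \<le> r"
  shows "norm (Y - s *\<^sub>R rmul (opapp H Y) (mat 1 - gram Y Y) - V)
    \<le> norm (U - V) + s * (3 * h * a * (a + 1) * r)"
proof -
  define M where "M = (1/2) *\<^sub>R (Y + U)"
  define A where "A = opapp (AU H M) M"
  define T where "T = rmul (opapp H Y) (mat 1 - gram Y Y)"
  have "M - V = (1/2) *\<^sub>R ((Y - V) + (U - V))"
    by (simp add: M_def algebra_simps scaleR_add_left[symmetric])
  then have M_near: "norm (M - V) \<le> r"
    using norm_triangle_le[OF add_mono[OF Y_near U_near]] by simp
  have "0 \<le> a" using sigma_le[OF U_near] sigma_max_nonneg order_trans by blast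
  have "0 \<le> r" using U_near norm_ge_zero order_trans by blast
  have "norm A \<le> 2 * h * sigma_max M * (sigma_max M + 1) * norm (M - V)"
    unfolding A_def by (rule norm_opapp_AU_le[OF H_lin H_sa V_eig V_orth H_le \<open>0 \<le> h\<close>])
  also have "\<dots> \<le> 2 * h * a * (a + 1) * r"
    using sigma_le[OF M_near] sigma_max_nonneg[of M] M_near \<open>0 \<le> h\<close>
    by (intro mult_mono add_mono) simp_all
  finally have norm_A: "norm A \<le> 2 * h * a * (a + 1) * r" .
  have "norm (mat 1 - gram Y Y) \<le> (sigma_max U + 1) * norm (U - V)"
    using norm_gram_diff_le[of U V] gram_midpoint_step[OF step]
    by (simp add: V_orth sigma_max_orthonormal[OF V_orth] norm_minus_commute)
  also have "\<dots> \<le> (a + 1) * r"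
    using sigma_le[OF U_near] U_near \<open>0 \<le> a\<close> by (intro mult_mono) simp_all
  finally have norm_X: "norm (mat 1 - gram Y Y) \<le> (a + 1) * r" .
  have "sigma_max (opapp H Y) \<le> h * a"
    using sigma_max_opapp_le[OF H_lin H_le \<open>0 \<le> h\<close>, of Y]
      mult_left_mono[OF sigma_le[OF Y_near] \<open>0 \<le> h\<close>]
    by linarith
  then have norm_T: "norm T \<le> h * a * (a + 1) * r"
    using norm_rmul_le_sigma_max[of "opapp H Y" "mat 1 - gram Y Y"] norm_X \<open>0 \<le> a\<close> \<open>0 \<le> h\<close>
      mult_mono[OF \<open>sigma_max (opapp H Y) \<le> h * a\<close> norm_X]
    by (simp add: T_def mult.assoc)
  have "Y - s *\<^sub>R T - V = (U - V) - s *\<^sub>R A - s *\<^sub>R T"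
    using step by (simp add: M_def A_def algebra_simps)
  also have "norm \<dots> \<le> norm (U - V) + s * norm A + s * norm T"
    using norm_triangle_ineq4[of "(U - V) - s *\<^sub>R A" "s *\<^sub>R T"]
      norm_triangle_ineq4[of "U - V" "s *\<^sub>R A"] \<open>0 \<le> s\<close>
    by simp
  also have "\<dots> \<le> norm (U - V) + s * (2 * h * a * (a + 1) * r) + s * (h * a * (a + 1) * r)"
    using norm_A norm_T \<open>0 \<le> s\<close> by (intro add_mono mult_left_mono order_refl)
  finally show ?thesis by (simp add: T_def algebra_simps)
qed

lemma power2_norm_eq_sum_orthonormal:
  fixes b :: "'i \<Rightarrow> 'v::euclidean_space"
  assumes "finite I" and "card I = DIM('v)"
    and orthonormal: "\<forall>i\<in>I. \<forall>j\<in>I. inner (b i) (b j) = (if i = j then 1 else 0)"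
  shows "(norm x)\<^sup>2 = (\<Sum>i\<in>I. (inner x (b i))\<^sup>2)"
proof -
  have "inj_on b I"
    using orthonormal by (intro inj_onI) (metis inner_commute zero_neq_one)
  have "pairwise orthogonal (b ` I)"
    using orthonormal by (auto simp: pairwise_def orthogonal_def)
  moreover have "0 \<notin> b ` I"
    using orthonormal by force
  ultimately have "independent (b ` I)"
    by (rule pairwise_orthogonal_independent)
  moreover have "card (b ` I) = DIM('v)"
    using card_image[OF \<open>inj_on b I\<close>] assms(2) by simp
  ultimately have "x \<in> span (b ` I)"
    using card_ge_dim_independent[of "b ` I" UNIV] by auto
  then have "(\<Sum>v\<in>b ` I. inner x v *\<^sub>R v) = x"
    using \<open>pairwise orthogonal (b ` I)\<close> orthonormal \<open>finite I\<close>
    by (intro orthonormal_basis_expand) (auto simp: norm_eq_1)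
  then have "(norm x)\<^sup>2 = inner x (\<Sum>i\<in>I. inner x (b i) *\<^sub>R b i)"
    by (simp add: power2_norm_eq_inner sum.reindex[OF \<open>inj_on b I\<close>])
  then show ?thesis
    by (simp add: inner_sum_right power2_eq_square)
qed

text \<open>Parseval's identity in the eigenbasis, with \<open>(H x, b\<^sub>i) = \<lambda>\<^sub>i (x, b\<^sub>i)\<close>.\<close>
lemma norm_le_of_orthonormal_eigenbasis:
  fixes H :: "'v::euclidean_space \<Rightarrow> 'v" and b :: "'i \<Rightarrow> 'v"
  assumes "finite I" and "card I = DIM('v)"
    and orthonormal: "\<forall>i\<in>I. \<forall>j\<in>I. inner (b i) (b j) = (if i = j then 1 else 0)"
    and H_sa: "\<And>x y. inner (H x) y = inner x (H y)"
    and eigen: "\<forall>i\<in>I. H (b i) = lam i *\<^sub>R b i" and lam_le: "\<forall>i\<in>I. \<bar>lam i\<bar> \<le> c"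
  shows "norm (H x) \<le> c * norm x"
proof (rule power2_le_imp_le)
  have "(norm (H x))\<^sup>2 = (\<Sum>i\<in>I. (lam i * inner x (b i))\<^sup>2)"
    using power2_norm_eq_sum_orthonormal[OF assms(1-3)] by (simp add: H_sa eigen)
  also have "\<dots> \<le> (\<Sum>i\<in>I. c\<^sup>2 * (inner x (b i))\<^sup>2)"
  proof (intro sum_mono)
    fix i assume "i \<in> I"
    then have "(lam i)\<^sup>2 \<le> c\<^sup>2"
      using lam_le by (metis abs_ge_zero power2_abs power_mono)
    then show "(lam i * inner x (b i))\<^sup>2 \<le> c\<^sup>2 * (inner x (b i))\<^sup>2"
      by (simp add: power_mult_distrib mult_right_mono)
  qed
  also have "\<dots> = (c * norm x)\<^sup>2"
    using power2_norm_eq_sum_orthonormal[OF assms(1-3)] by (simp add: power_mult_distrib sum_distrib_left)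
  finally show "(norm (H x))\<^sup>2 \<le> (c * norm x)\<^sup>2" .
  have "I \<noteq> {}"
    using assms(2) by auto
  then have "0 \<le> c"
    using lam_le by (meson abs_ge_zero all_not_in_conv order_trans)
  then show "0 \<le> c * norm x" by simp
qed

lemma norm_le_max_abs_extreme_eigenvalue:
  fixes H :: "'v::euclidean_space \<Rightarrow> 'v"
  assumes "\<exists>b :: nat \<Rightarrow> 'v.
          (\<forall>i\<in>{1..DIM('v)}. \<forall>j\<in>{1..DIM('v)}. inner (b i) (b j) = (if i = j then 1 else 0))
        \<and> (\<forall>i\<in>{1..DIM('v)}. H (b i) = lam i *\<^sub>R b i)"
    and "\<And>i j. 1 \<le> i \<Longrightarrow> i \<le> j \<Longrightarrow> j \<le> DIM('v) \<Longrightarrow> lam i \<le> lam j"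
    and "\<And>x y. inner (H x) y = inner x (H y)"
  shows "norm (H x) \<le> max \<bar>lam 1\<bar> \<bar>lam DIM('v)\<bar> * norm x"
proof -
  have "\<forall>i\<in>{1..DIM('v)}. \<bar>lam i\<bar> \<le> max \<bar>lam 1\<bar> \<bar>lam DIM('v)\<bar>"
    using assms(2)[of 1] assms(2)[of _ "DIM('v)"] by force
  with assms(1) show ?thesis
    using norm_le_of_orthonormal_eigenbasis[of "{1..DIM('v)}" _ H lam, OF _ _ _ assms(3)] by auto
qed

lemma sigma_max_le_Sup_ball:
  assumes "norm (U - V) \<le> r"
  shows "sigma_max U \<le> Sup {sigma_max W | W. norm (W - V) \<le> r}"
proof (rule cSup_upper)
  show "bdd_above {sigma_max W | W. norm (W - V) \<le> r}"
  proof (rule bdd_aboveI)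
    fix x assume "x \<in> {sigma_max W | W. norm (W - V) \<le> r}"
    then obtain W where "x = sigma_max W" and "norm (W - V) \<le> r" by blast
    then show "x \<le> norm V + r"
      using sigma_max_le_norm[of W] norm_triangle_sub[of W V] by simp
  qed
qed (use assms in blast)

lemma one_le_Sup_sigma_max_ball:
  assumes "gram V V = mat 1" and "0 \<le> r"
  shows "1 \<le> Sup {sigma_max W | W. norm (W - V) \<le> r}"
  using sigma_max_le_Sup_ball[of V V r] assms by (simp add: sigma_max_orthonormal)

lemma rmul_rmul: "rmul (rmul U A) B = rmul U (A ** B)"
  unfolding rmul_def matrix_matrix_mult_def
  by (simp add: vec_eq_iff scaleR_sum_right scaleR_sum_left sum_distrib_right)
    (subst sum.swap, simp add: mult.commute)

lemma rmul_mat_1: "rmul U (mat 1) = U"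
  by (simp add: vec_eq_iff rmul_def mat_def if_distrib[of "\<lambda>x. x *\<^sub>R _"] cong: if_cong)

lemma dist_cls_le:
  assumes "orthogonal_matrix Q"
  shows "dist_cls U V \<le> norm (rmul U Q - V)"
  unfolding dist_cls_def by (rule cInf_lower) (use assms in \<open>auto intro: bdd_belowI[of _ 0]\<close>)

lemma dist_cls_le_norm: "dist_cls U V \<le> norm (U - V)"
  using dist_cls_le[OF orthogonal_matrix_id, of U V] by (simp add: rmul_mat_1)

lemma dist_cls_less_obtain:
  assumes "dist_cls U V < t"
  obtains Q where "orthogonal_matrix Q" and "norm (rmul U Q - V) < t"
proof -
  have "{norm (rmul U Q - V) | Q. orthogonal_matrix Q} \<noteq> {}"
    using orthogonal_matrix_id by blast
  from cInf_lessD[OF this] assms that show ?thesis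
    unfolding dist_cls_def by blast
qed

text \<open>The map is applied to a near-optimal representative \<open>U = W Q\<close> of the class of \<open>W\<close>;
  equivariance transports the estimate back to \<open>W\<close>.\<close>
lemma dist_cls_equivariant_le:
  assumes "dist_cls W V \<le> d" and "d < \<rho>"
    and moves: "\<And>U. norm (U - V) \<le> \<rho> \<Longrightarrow> norm (G U - V) \<le> norm (U - V) + c"
    and equivariant: "\<And>U Q. norm (U - V) \<le> \<rho> \<Longrightarrow> orthogonal_matrix Q \<Longrightarrow>
      G (rmul U Q) = rmul (G U) Q"
  shows "dist_cls (G W) V \<le> d + c"
proof -
  have "dist_cls (G W) V - c \<le> t" if "d < t" "t < \<rho>" for t
  proof -
    obtain Q where Q: "orthogonal_matrix Q" and near: "norm (rmul W Q - V) < t"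
      using dist_cls_less_obtain[of W V t] assms(1) \<open>d < t\<close> by auto
    define U where "U = rmul W Q"
    have U_near: "norm (U - V) \<le> \<rho>" using near \<open>t < \<rho>\<close> by (simp add: U_def)
    have QQ: "Q ** transpose Q = mat 1" "transpose Q ** Q = mat 1"
      using Q by (auto simp: orthogonal_matrix_def)
    have "G W = rmul (G U) (transpose Q)"
      using equivariant[OF U_near, of "transpose Q"] Q
      by (simp add: U_def rmul_rmul QQ rmul_mat_1 orthogonal_matrix_transpose)
    then have "dist_cls (G W) V \<le> norm (G U - V)"
      using dist_cls_le[OF Q, of "G W" V] by (simp add: rmul_rmul QQ rmul_mat_1)
    then show ?thesis using moves[OF U_near] near by (simp add: U_def)
  qed
  then have "dist_cls (G W) V - c \<le> d"
    by (rule dense_ge_bounded[OF \<open>d < \<rho>\<close>])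
  then show ?thesis by simp
qed

lemma mult_le_if_le_divide:
  fixes s x D e :: real
  assumes "0 \<le> s" and "s \<le> e / D" and "0 \<le> x" and "x \<le> D" and "0 \<le> e"
  shows "s * x \<le> e"
proof (cases "D = 0")
  case False
  then have "s * D \<le> e" using assms by (simp add: pos_le_divide_eq)
  then show ?thesis using mult_left_mono[OF \<open>x \<le> D\<close> \<open>0 \<le> s\<close>] by simp
qed (use assms in simp)

theorem lemma4p5:
  fixes H :: "'v::euclidean_space \<Rightarrow> 'v"
    and lam :: "nat \<Rightarrow> real"
    and Vs :: "'v^'n::finite"
    and idx :: "'n \<Rightarrow> nat"
    and ghat g :: "'v^'n \<Rightarrow> real \<Rightarrow> 'v^'n"
    and eta_a eta_b delta_star eta1 eta2 delta_b :: real
  assumes H_lin: "linear H"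
    and H_sa: "\<And>x y. inner (H x) y = inner x (H y)"
    and eig_basis: "\<exists>b :: nat \<Rightarrow> 'v.
          (\<forall>i\<in>{1..DIM('v)}. \<forall>j\<in>{1..DIM('v)}. inner (b i) (b j) = (if i = j then 1 else 0))
        \<and> (\<forall>i\<in>{1..DIM('v)}. H (b i) = lam i *\<^sub>R b i)"
    and lam_sorted: "\<And>i j. 1 \<le> i \<Longrightarrow> i \<le> j \<Longrightarrow> j \<le> DIM('v) \<Longrightarrow> lam i \<le> lam j"
    and lam1_neg: "lam 1 < 0"
    and N_lt: "CARD('n) < DIM('v)"
    and gap: "lam (CARD('n)) < lam (CARD('n) + 1)"
    and idx_bij: "bij_betw idx UNIV {1..CARD('n)}"
    and Vs_orth: "gram Vs Vs = mat 1"
    and Vs_eig: "\<And>i. H (Vs$i) = lam (idx i) *\<^sub>R Vs$i"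
    and pos: "eta_a > 0" "eta_b > 0" "delta_star > 0"
    and ghat_maps: "\<And>U s. norm (U - Vs) \<le> eta_a \<Longrightarrow> s \<in> {0..delta_star} \<Longrightarrow>
          norm (ghat U s - Vs) \<le> eta_b"
    and ghat_eq: "\<And>U s. norm (U - Vs) \<le> eta_a \<Longrightarrow> s \<in> {0..delta_star} \<Longrightarrow>
          ghat U s - U = - s *\<^sub>R opapp (AU H ((1/2) *\<^sub>R (ghat U s + U))) ((1/2) *\<^sub>R (ghat U s + U))"
    and ghat_unique: "\<And>U s W. norm (U - Vs) \<le> eta_a \<Longrightarrow> s \<in> {0..delta_star} \<Longrightarrow>
          norm (W - Vs) \<le> eta_b \<Longrightarrow>
          W - U = - s *\<^sub>R opapp (AU H ((1/2) *\<^sub>R (W + U))) ((1/2) *\<^sub>R (W + U)) \<Longrightarrow>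
          W = ghat U s"
    and g_maps: "\<And>U s. dist_cls U Vs \<le> eta_a \<Longrightarrow> s \<in> {0..delta_star} \<Longrightarrow>
          dist_cls (g U s) Vs \<le> eta_b"
    and g_eq: "\<And>U s. norm (U - Vs) \<le> eta_a \<Longrightarrow> s \<in> {0..delta_star} \<Longrightarrow>
          g U s = ghat U s - s *\<^sub>R rmul (opapp H (ghat U s)) (mat 1 - gram (ghat U s) (ghat U s))"
    and g_inv: "\<And>U Q s. dist_cls U Vs \<le> eta_a \<Longrightarrow> s \<in> {0..delta_star} \<Longrightarrow>
          orthogonal_matrix Q \<Longrightarrow> g (rmul U Q) s = rmul (g U s) Q"
    and eta1: "0 < eta1" "eta1 < min 1 (min eta_a eta_b)"
    and eta2: "0 < eta2" "eta2 < eta1"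
    and delta_b: "0 < delta_b"
      "delta_b \<le> min ((eta1 - eta2) /
          ((6 * (Sup {sigma_max U | U. norm (U - Vs) \<le> max eta_a eta_b})\<^sup>2
              * max \<bar>lam 1\<bar> \<bar>lam DIM('v)\<bar>) * max eta_a eta_b
           + \<bar>lam 1\<bar> * (Sup {sigma_max U | U. norm (U - Vs) \<le> max eta_a eta_b})
              * ((Sup {sigma_max U | U. norm (U - Vs) \<le> max eta_a eta_b}) + 1) * eta2))
          delta_star"
  shows "\<forall>W s. dist_cls W Vs \<le> eta2 \<and> s \<in> {0..delta_b} \<longrightarrow> dist_cls (g W s) Vs \<le> eta1"
proof (intro allI impI)
  fix W s
  assume "dist_cls W Vs \<le> eta2 \<and> s \<in> {0..delta_b}"
  then have W: "dist_cls W Vs \<le> eta2" and "0 \<le> s" and "s \<le> delta_b" by auto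
  define r where "r = max eta_a eta_b"
  define \<alpha> where "\<alpha> = Sup {sigma_max U | U. norm (U - Vs) \<le> r}"
  define h where "h = max \<bar>lam 1\<bar> \<bar>lam DIM('v)\<bar>"
  have "0 \<le> h" "0 < r" using pos by (simp_all add: h_def r_def)
  have "1 \<le> \<alpha>" unfolding \<alpha>_def using one_le_Sup_sigma_max_ball[OF Vs_orth] \<open>0 < r\<close> by simp
  have H_le: "norm (H x) \<le> h * norm x" for x
    unfolding h_def by (rule norm_le_max_abs_extreme_eigenvalue[OF eig_basis lam_sorted H_sa])
  have s: "s \<in> {0..delta_star}" using \<open>0 \<le> s\<close> \<open>s \<le> delta_b\<close> delta_b(2) by simp
  have "norm (g U s - Vs) \<le> norm (U - Vs) + s * (3 * h * \<alpha> * (\<alpha> + 1) * r)"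
    if "norm (U - Vs) \<le> eta1" for U
  proof -
    have U: "norm (U - Vs) \<le> eta_a" using that eta1(2) by simp
    show ?thesis
      unfolding g_eq[OF U s] using ghat_maps[OF U s] U
      by (intro norm_midpoint_step_le[OF H_lin H_sa Vs_eig Vs_orth H_le \<open>0 \<le> h\<close> ghat_eq[OF U s]
            \<open>0 \<le> s\<close>]) (simp_all add: \<alpha>_def r_def sigma_max_le_Sup_ball)
  qed
  then have "dist_cls (g W s) Vs \<le> eta2 + s * (3 * h * \<alpha> * (\<alpha> + 1) * r)"
    using g_inv[OF order_trans[OF dist_cls_le_norm] s] eta1(2)
    by (intro dist_cls_equivariant_le[OF W eta2(2)]) auto
  moreover have "s * (3 * h * \<alpha> * (\<alpha> + 1) * r) \<le> eta1 - eta2"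
  proof (rule mult_le_if_le_divide[OF \<open>0 \<le> s\<close>])
    show "s \<le> (eta1 - eta2) / (6 * \<alpha>\<^sup>2 * h * r + \<bar>lam 1\<bar> * \<alpha> * (\<alpha> + 1) * eta2)"
      using \<open>s \<le> delta_b\<close> delta_b(2)[folded r_def, folded \<alpha>_def h_def] by simp
    have "3 * h * \<alpha> * (\<alpha> + 1) * r \<le> 3 * h * \<alpha> * (2 * \<alpha>) * r"
      using \<open>0 \<le> h\<close> \<open>1 \<le> \<alpha>\<close> \<open>0 < r\<close> by (intro mult_right_mono mult_left_mono) auto
    also have "\<dots> \<le> 6 * \<alpha>\<^sup>2 * h * r + \<bar>lam 1\<bar> * \<alpha> * (\<alpha> + 1) * eta2"
      using \<open>1 \<le> \<alpha>\<close> eta2 by (simp add: power2_eq_square)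
    finally show "3 * h * \<alpha> * (\<alpha> + 1) * r \<le> 6 * \<alpha>\<^sup>2 * h * r + \<bar>lam 1\<bar> * \<alpha> * (\<alpha> + 1) * eta2" .
  qed (use \<open>0 \<le> h\<close> \<open>1 \<le> \<alpha>\<close> \<open>0 < r\<close> eta2 in simp_all)
  ultimately show "dist_cls (g W s) Vs \<le> eta1" by simp
qed

end
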